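(* Let $(\mathcal X,\mathcal B,\pi)$ be a measure space with $\pi$ $\sigma$-finite, $r$ measurable, and $\{\varepsilon(x)\}$ an arbitrary real-valued random field. Assume: (a) $p_0$ (and a reference density $p_{\rm ref}$) in $\mathcal P_\pi$ satisfy $\int p|\log p|\,d\pi<\infty$; (b) $\mathbb E_{X\sim p}[e^{|r(X)+\varepsilon(X)|}]<\infty$ for all $p\in\mathcal P_\pi$; (c) $0<Q_*<\infty$, $Q\le Q_*$ everywhere; (d) $\int_Ap_0\,d\pi>0$ where $A=\{Q=Q_*\}$. Let $p_{t+1}(x)=p_t(x)Q(x)/\mathbb E_{X\sim p_t}Q(X)$. Then for all $t$, $$\mathbb E_{X\sim p_{t+1}}Q(X)\ge\mathbb E_{X\sim p_t}Q(X)+\frac{\operatorname{Var}_{X\sim p_t}(Q(X))}{\mathbb E_{X\sim p_t}Q(X)},$$ and $\lim_{t\to\infty}\mathbb E_{X\sim p_t}Q(X)=Q_*$.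
   Context: $\mathcal P_\pi$ = probability densities w.r.t. $\pi$. $Q(x):=e^{r(x)}\mathbb E[e^{\varepsilon(x)}]$ (conditional expectation over the noise independent of $X$), $Q_*:=\operatorname*{ess\,sup}_\pi Q$. *)

theory Defs
  imports "HOL-Probability.Probability"
begin

definition dens_set :: "'a measure \<Rightarrow> ('a \<Rightarrow> real) set" where
  "dens_set M = {p. p \<in> borel_measurable M \<and> (\<forall>x\<in>space M. 0 \<le> p x)
                    \<and> (\<integral>\<^sup>+ x. ennreal (p x) \<partial>M) = 1}"

text \<open>Q(x) = e^{r(x)} E[e^{eps(x)}], the expectation taken over the noise space N
  (extended-nonnegative-valued, so it is defined without integrability conditions).\<close>
definition Qfun :: "('a \<Rightarrow> real) \<Rightarrow> ('a \<Rightarrow> 'w \<Rightarrow> real) \<Rightarrow> 'w measure \<Rightarrow> 'a \<Rightarrow> ennreal" where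
  "Qfun r eps N x = ennreal (exp (r x)) * (\<integral>\<^sup>+ w. ennreal (exp (eps x w)) \<partial>N)"

definition Exp_dens :: "'a measure \<Rightarrow> ('a \<Rightarrow> real) \<Rightarrow> ('a \<Rightarrow> real) \<Rightarrow> real" where
  "Exp_dens M p f = (\<integral> x. p x * f x \<partial>M)"

definition Var_dens :: "'a measure \<Rightarrow> ('a \<Rightarrow> real) \<Rightarrow> ('a \<Rightarrow> real) \<Rightarrow> real" where
  "Var_dens M p f = (\<integral> x. p x * (f x - Exp_dens M p f)\<^sup>2 \<partial>M)"

primrec iter_dens :: "'a measure \<Rightarrow> ('a \<Rightarrow> real) \<Rightarrow> ('a \<Rightarrow> real) \<Rightarrow> nat \<Rightarrow> 'a \<Rightarrow> real" where
  "iter_dens M Q p0 0 = p0"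
| "iter_dens M Q p0 (Suc t) =
     (\<lambda>x. iter_dens M Q p0 t x * Q x / Exp_dens M (iter_dens M Q p0 t) Q)"

end

theory Submission
  imports Defs
begin

text \<open>The iterates are the tilted densities \<open>p\<^sub>t = p\<^sub>0 Q\<^sup>t / m\<^sub>t\<close> with moments
  \<open>m\<^sub>t = \<integral> p\<^sub>0 Q\<^sup>t d\<pi>\<close>, so the mean \<open>E\<^sub>t = m\<^sub>t\<^sub>+\<^sub>1 / m\<^sub>t\<close> satisfies
  \<open>E\<^sub>t\<^sub>+\<^sub>1 = E\<^sub>t + Var\<^sub>t / E\<^sub>t\<close> exactly; in particular it increases to a limit
  \<open>L \<le> Q\<^sub>*\<close>. Then \<open>m\<^sub>t \<le> L\<^sup>t\<close>, while \<open>m\<^sub>t \<ge> Q\<^sub>*\<^sup>t \<integral>\<^sub>A p\<^sub>0 d\<pi>\<close> with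
  \<open>\<integral>\<^sub>A p\<^sub>0 d\<pi> > 0\<close>, which forces \<open>L = Q\<^sub>*\<close>.\<close>

definition moment :: "'a measure \<Rightarrow> ('a \<Rightarrow> real) \<Rightarrow> ('a \<Rightarrow> real) \<Rightarrow> nat \<Rightarrow> real" where
  "moment M p q n = (\<integral>x. p x * q x ^ n \<partial>M)"

lemma Var_dens_nonneg:
  assumes "\<And>x. x \<in> space M \<Longrightarrow> 0 \<le> p x"
  shows "0 \<le> Var_dens M p f"
  unfolding Var_dens_def using assms by (intro Bochner_Integration.integral_nonneg) auto

lemma ratio_tendsto_of_exponential_bounds:
  fixes m :: "nat \<Rightarrow> real" and a c :: real
  assumes pos: "\<And>n. 0 < m n" and ratio_incseq: "incseq (\<lambda>n. m (Suc n) / m n)"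
    and upper: "\<And>n. m (Suc n) \<le> c * m n" and lower: "\<And>n. c ^ n * a \<le> m n" and a: "0 < a"
  shows "(\<lambda>n. m (Suc n) / m n) \<longlonglongrightarrow> c"
proof -
  define \<rho> where "\<rho> = (\<lambda>n. m (Suc n) / m n)"
  have \<rho>_le_c: "\<rho> n \<le> c" for n
    using upper[of n] pos[of n] by (simp add: \<rho>_def pos_divide_le_eq)
  then have bdd: "bdd_above (range \<rho>)"
    by (intro bdd_aboveI[where M=c]) auto
  define L where "L = (SUP n. \<rho> n)"
  have lim: "\<rho> \<longlonglongrightarrow> L"
    unfolding L_def using LIMSEQ_incseq_SUP[OF bdd] ratio_incseq by (simp add: \<rho>_def)
  have \<rho>_le_L: "\<rho> n \<le> L" for n
    unfolding L_def using bdd by (intro cSUP_upper) auto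
  have "L \<le> c"
    unfolding L_def using \<rho>_le_c by (intro cSUP_least) auto
  have "0 < \<rho> 0"
    using pos by (simp add: \<rho>_def)
  with \<rho>_le_L[of 0] have L_pos: "0 < L"
    by linarith
  have m_le: "m n \<le> m 0 * L ^ n" for n
  proof (induction n)
    case (Suc n)
    have "m (Suc n) = \<rho> n * m n"
      using pos[of n] by (simp add: \<rho>_def)
    also have "\<dots> \<le> L * (m 0 * L ^ n)"
      using \<rho>_le_L[of n] Suc pos[of n] L_pos by (intro mult_mono) auto
    finally show ?case
      by (simp add: ac_simps)
  qed simp
  have "c \<le> L"
  proof (rule ccontr)
    assume "\<not> c \<le> L"
    then have "1 < c / L"
      using L_pos by simp
    then obtain n where n: "m 0 / a < (c / L) ^ n"
      using real_arch_pow by blast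
    have "c ^ n * a \<le> m 0 * L ^ n"
      using lower[of n] m_le[of n] by linarith
    then have "(c / L) ^ n \<le> m 0 / a"
      using L_pos a by (simp add: power_divide field_simps)
    with n show False by simp
  qed
  with \<open>L \<le> c\<close> lim show ?thesis
    by (simp add: \<rho>_def)
qed

context
  fixes M :: "'a measure" and p q :: "'a \<Rightarrow> real" and c :: real
  assumes p_integrable: "integrable M p"
    and p_nonneg: "\<And>x. x \<in> space M \<Longrightarrow> 0 \<le> p x"
    and q_measurable: "q \<in> borel_measurable M"
    and q_nonneg: "\<And>x. x \<in> space M \<Longrightarrow> 0 \<le> q x"
    and q_le: "\<And>x. x \<in> space M \<Longrightarrow> q x \<le> c"
begin

lemma integrable_moment: "integrable M (\<lambda>x. p x * q x ^ n)"
proof (rule Bochner_Integration.integrable_bound)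
  show "integrable M (\<lambda>x. c ^ n * p x)"
    using p_integrable by simp
  show "(\<lambda>x. p x * q x ^ n) \<in> borel_measurable M"
    using borel_measurable_integrable[OF p_integrable] q_measurable by measurable
  show "AE x in M. norm (p x * q x ^ n) \<le> norm (c ^ n * p x)"
  proof (rule AE_I2)
    fix x assume x: "x \<in> space M"
    have "q x ^ n \<le> c ^ n"
      using q_nonneg[OF x] q_le[OF x] by (intro power_mono)
    then show "norm (p x * q x ^ n) \<le> norm (c ^ n * p x)"
      using p_nonneg[OF x] q_nonneg[OF x] by (simp add: abs_mult mult.commute mult_left_mono)
  qed
qed

lemma moment_nonneg: "0 \<le> moment M p q n"
  unfolding moment_def using p_nonneg q_nonneg by (intro Bochner_Integration.integral_nonneg) auto

lemma moment_Suc_le: "moment M p q (Suc n) \<le> c * moment M p q n"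
proof -
  have "moment M p q (Suc n) \<le> (\<integral>x. c * (p x * q x ^ n) \<partial>M)"
    unfolding moment_def
  proof (rule integral_mono)
    fix x assume x: "x \<in> space M"
    have "(p x * q x ^ n) * q x \<le> (p x * q x ^ n) * c"
      using p_nonneg[OF x] q_nonneg[OF x] q_le[OF x] by (intro mult_left_mono) auto
    then show "p x * q x ^ Suc n \<le> c * (p x * q x ^ n)"
      by (simp add: algebra_simps)
  qed (rule integrable_moment, intro integrable_mult_right integrable_moment)
  then show ?thesis
    by (simp add: moment_def)
qed

lemma moment_ge_indicator:
  assumes A: "A \<in> sets M" and q_eq: "\<And>x. x \<in> A \<Longrightarrow> q x = c"
  shows "c ^ n * (\<integral>x. p x * indicator A x \<partial>M) \<le> moment M p q n"
proof -
  have "c ^ n * (\<integral>x. p x * indicator A x \<partial>M) = (\<integral>x. c ^ n * (p x * indicator A x) \<partial>M)"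
    by simp
  also have "\<dots> \<le> moment M p q n"
    unfolding moment_def
  proof (rule integral_mono)
    show "integrable M (\<lambda>x. c ^ n * (p x * indicator A x))"
      using integrable_real_mult_indicator[OF A p_integrable] by simp
    fix x assume "x \<in> space M"
    then show "c ^ n * (p x * indicator A x) \<le> p x * q x ^ n"
      using q_eq p_nonneg q_nonneg by (cases "x \<in> A") auto
  qed (rule integrable_moment)
  finally show ?thesis .
qed

lemma moment_pos:
  assumes "A \<in> sets M" and "\<And>x. x \<in> A \<Longrightarrow> q x = c"
    and "0 < c" and "0 < (\<integral>x. p x * indicator A x \<partial>M)"
  shows "0 < moment M p q n"
proof -
  have "0 < c ^ n * (\<integral>x. p x * indicator A x \<partial>M)"
    using assms(3,4) by simp
  also have "\<dots> \<le> moment M p q n"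
    by (rule moment_ge_indicator[OF assms(1,2)])
  finally show ?thesis .
qed

lemma Exp_dens_tilted:
  "Exp_dens M (\<lambda>x. p x * q x ^ n / moment M p q n) q = moment M p q (Suc n) / moment M p q n"
proof -
  have "(\<lambda>x. p x * q x ^ n / moment M p q n * q x) = (\<lambda>x. p x * q x ^ Suc n / moment M p q n)"
    by (auto simp: algebra_simps)
  then show ?thesis
    by (simp add: Exp_dens_def moment_def)
qed

lemma Var_dens_tilted:
  "Var_dens M (\<lambda>x. p x * q x ^ n / moment M p q n) q
     = moment M p q (Suc (Suc n)) / moment M p q n - (moment M p q (Suc n) / moment M p q n)\<^sup>2"
proof -
  define m where "m k = moment M p q k" for k
  define E where "E = m (Suc n) / m n"
  have "Var_dens M (\<lambda>x. p x * q x ^ n / m n) q = (\<integral>x. p x * q x ^ n / m n * (q x - E)\<^sup>2 \<partial>M)"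
    by (simp only: Var_dens_def m_def E_def Exp_dens_tilted)
  also have "\<dots> = (\<integral>x. (1 / m n) * (p x * q x ^ Suc (Suc n)) - (2 * E / m n) * (p x * q x ^ Suc n)
                     + (E\<^sup>2 / m n) * (p x * q x ^ n) \<partial>M)"
    by (intro Bochner_Integration.integral_cong refl, cases "m n = 0")
      (simp_all add: field_simps power2_eq_square)
  also have "\<dots> = (1 / m n) * m (Suc (Suc n)) - (2 * E / m n) * m (Suc n) + (E\<^sup>2 / m n) * m n"
  proof -
    have i: "integrable M (\<lambda>x. k * (p x * q x ^ j))" for k j
      using integrable_moment[of j] by simp
    show ?thesis
      by (simp only: Bochner_Integration.integral_add[OF Bochner_Integration.integrable_diff[OF i i] i]
          Bochner_Integration.integral_diff[OF i i] integral_mult_right_zero m_def moment_def)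
  qed
  also have "\<dots> = m (Suc (Suc n)) / m n - E\<^sup>2"
    by (cases "m n = 0") (simp_all add: E_def field_simps power2_eq_square)
  finally show ?thesis
    by (simp add: m_def E_def)
qed

lemma iter_dens_eq_tilted:
  assumes p_total: "(\<integral>x. p x \<partial>M) = 1"
  shows "iter_dens M q p n = (\<lambda>x. p x * q x ^ n / moment M p q n)"
proof (induction n)
  case 0
  then show ?case
    using p_total by (simp add: moment_def)
next
  case (Suc n)
  show ?case
  proof (cases "moment M p q n = 0")
    case True
    \<comment> \<open>then \<open>m\<^sub>n\<^sub>+\<^sub>1 = 0\<close> as well, and both sides vanish because \<open>x / 0 = 0\<close>\<close>
    then have "moment M p q (Suc n) = 0"
      using moment_Suc_le[of n] moment_nonneg[of "Suc n"] by simp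
    with True show ?thesis
      by (simp add: Suc)
  next
    case False
    then show ?thesis
      by (simp add: Suc Exp_dens_tilted field_simps)
  qed
qed

lemma Exp_dens_iter_dens:
  assumes "(\<integral>x. p x \<partial>M) = 1"
  shows "Exp_dens M (iter_dens M q p n) q = moment M p q (Suc n) / moment M p q n"
  using assms by (simp add: iter_dens_eq_tilted Exp_dens_tilted)

lemma iter_dens_nonneg:
  assumes "(\<integral>x. p x \<partial>M) = 1" and "x \<in> space M"
  shows "0 \<le> iter_dens M q p n x"
  using assms p_nonneg q_nonneg moment_nonneg by (simp add: iter_dens_eq_tilted)

lemma Exp_dens_iter_dens_Suc:
  assumes p_total: "(\<integral>x. p x \<partial>M) = 1" and pos: "\<And>n. 0 < moment M p q n"
  shows "Exp_dens M (iter_dens M q p (Suc n)) q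
           = Exp_dens M (iter_dens M q p n) q
             + Var_dens M (iter_dens M q p n) q / Exp_dens M (iter_dens M q p n) q"
  unfolding Exp_dens_iter_dens[OF p_total]
  unfolding iter_dens_eq_tilted[OF p_total] Var_dens_tilted
  using pos[of n] pos[of "Suc n"] by (simp add: field_simps power2_eq_square)

lemma Exp_dens_iter_dens_tendsto:
  assumes p_total: "(\<integral>x. p x \<partial>M) = 1"
    and A: "A \<in> sets M" and q_eq: "\<And>x. x \<in> A \<Longrightarrow> q x = c"
    and c_pos: "0 < c" and A_mass: "0 < (\<integral>x. p x * indicator A x \<partial>M)"
  shows "(\<lambda>n. Exp_dens M (iter_dens M q p n) q) \<longlonglongrightarrow> c"
proof -
  have pos: "0 < moment M p q n" for n
    using moment_pos[OF A q_eq c_pos A_mass] .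
  have "incseq (\<lambda>n. Exp_dens M (iter_dens M q p n) q)"
  proof (rule incseq_SucI)
    fix n
    have "0 \<le> Var_dens M (iter_dens M q p n) q"
      using iter_dens_nonneg[OF p_total] by (rule Var_dens_nonneg)
    moreover have "0 < Exp_dens M (iter_dens M q p n) q"
      using pos[of n] pos[of "Suc n"] by (simp add: Exp_dens_iter_dens[OF p_total])
    ultimately show "Exp_dens M (iter_dens M q p n) q \<le> Exp_dens M (iter_dens M q p (Suc n)) q"
      unfolding Exp_dens_iter_dens_Suc[OF p_total pos] by simp
  qed
  then show ?thesis
    unfolding Exp_dens_iter_dens[OF p_total]
    by (rule ratio_tendsto_of_exponential_bounds[OF pos _ moment_Suc_le
          moment_ge_indicator[OF A q_eq] A_mass])
qed

end

lemma dens_set_nonneg: "p \<in> dens_set M \<Longrightarrow> x \<in> space M \<Longrightarrow> 0 \<le> p x"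
  unfolding dens_set_def by auto

lemma dens_set_integrable: "p \<in> dens_set M \<Longrightarrow> integrable M p"
  unfolding dens_set_def by (intro integrableI_nonneg) (auto intro: AE_I2)

lemma dens_set_integral_eq_1: "p \<in> dens_set M \<Longrightarrow> (\<integral>x. p x \<partial>M) = 1"
  unfolding dens_set_def by (subst integral_eq_nn_integral) auto

lemma dens_set_integral_indicator_pos:
  assumes p: "p \<in> dens_set M" and A: "A \<in> sets M"
    and mass: "0 < (\<integral>\<^sup>+x. ennreal (p x) * indicator A x \<partial>M)"
  shows "0 < (\<integral>x. p x * indicator A x \<partial>M)"
proof -
  have int: "integrable M (\<lambda>x. p x * indicator A x)"
    using integrable_real_mult_indicator[OF A dens_set_integrable[OF p]] .
  have "(\<integral>\<^sup>+x. ennreal (p x) * indicator A x \<partial>M) = (\<integral>\<^sup>+x. ennreal (p x * indicator A x) \<partial>M)"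
    by (intro nn_integral_cong) (simp add: indicator_def)
  also have "\<dots> = ennreal (\<integral>x. p x * indicator A x \<partial>M)"
    using int dens_set_nonneg[OF p] by (intro nn_integral_eq_integral) (auto intro: AE_I2)
  finally show ?thesis
    using mass by simp
qed

lemma Qfun_measurable:
  assumes "sigma_finite_measure N" and "r \<in> borel_measurable M"
    and "(\<lambda>(x, w). eps x w) \<in> borel_measurable (M \<Otimes>\<^sub>M N)"
  shows "Qfun r eps N \<in> borel_measurable M"
proof -
  have "(\<lambda>z. ennreal (exp (case z of (x, w) \<Rightarrow> eps x w))) \<in> borel_measurable (M \<Otimes>\<^sub>M N)"
    by (rule measurable_compose[OF assms(3)]) auto
  then have "(\<lambda>(x, w). ennreal (exp (eps x w))) \<in> borel_measurable (M \<Otimes>\<^sub>M N)"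
    by (simp add: case_prod_beta')
  then have "(\<lambda>x. \<integral>\<^sup>+ w. ennreal (exp (eps x w)) \<partial>N) \<in> borel_measurable M"
    by (rule sigma_finite_measure.borel_measurable_nn_integral[OF assms(1)])
  then show ?thesis
    unfolding Qfun_def[abs_def] using assms(2) by measurable
qed

theorem lemma4:
  fixes M :: "'a measure" and N :: "'w measure"
    and r :: "'a \<Rightarrow> real" and eps :: "'a \<Rightarrow> 'w \<Rightarrow> real"
    and p0 pref :: "'a \<Rightarrow> real"
  assumes sf: "sigma_finite_measure M"
    and r_meas: "r \<in> borel_measurable M"
    and N_prob: "prob_space N"
    and eps_meas: "(\<lambda>(x, w). eps x w) \<in> borel_measurable (M \<Otimes>\<^sub>M N)"
    and p0_dens: "p0 \<in> dens_set M" and pref_dens: "pref \<in> dens_set M"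
    and p0_ent: "integrable M (\<lambda>x. p0 x * \<bar>ln (p0 x)\<bar>)"
    and pref_ent: "integrable M (\<lambda>x. pref x * \<bar>ln (pref x)\<bar>)"
    and mgf: "\<forall>p\<in>dens_set M.
               (\<integral>\<^sup>+ x. ennreal (p x) * (\<integral>\<^sup>+ w. ennreal (exp \<bar>r x + eps x w\<bar>) \<partial>N) \<partial>M) < \<infinity>"
    and Qstar_pos: "0 < esssup M (Qfun r eps N)"
    and Qstar_fin: "esssup M (Qfun r eps N) < \<infinity>"
    and Q_le: "\<forall>x\<in>space M. Qfun r eps N x \<le> esssup M (Qfun r eps N)"
    and A_pos: "(\<integral>\<^sup>+ x. ennreal (p0 x) *
                   indicator {x\<in>space M. Qfun r eps N x = esssup M (Qfun r eps N)} x \<partial>M) > 0"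
  shows "(\<forall>t. Exp_dens M (iter_dens M (\<lambda>x. enn2real (Qfun r eps N x)) p0 (Suc t))
                       (\<lambda>x. enn2real (Qfun r eps N x))
             \<ge> Exp_dens M (iter_dens M (\<lambda>x. enn2real (Qfun r eps N x)) p0 t)
                       (\<lambda>x. enn2real (Qfun r eps N x))
               + Var_dens M (iter_dens M (\<lambda>x. enn2real (Qfun r eps N x)) p0 t)
                       (\<lambda>x. enn2real (Qfun r eps N x))
                 / Exp_dens M (iter_dens M (\<lambda>x. enn2real (Qfun r eps N x)) p0 t)
                       (\<lambda>x. enn2real (Qfun r eps N x)))
         \<and> (\<lambda>t. Exp_dens M (iter_dens M (\<lambda>x. enn2real (Qfun r eps N x)) p0 t)
                       (\<lambda>x. enn2real (Qfun r eps N x)))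
           \<longlonglongrightarrow> enn2real (esssup M (Qfun r eps N))"
proof -
  define q where "q = (\<lambda>x. enn2real (Qfun r eps N x))"
  define c where "c = enn2real (esssup M (Qfun r eps N))"
  define A where "A = {x\<in>space M. Qfun r eps N x = esssup M (Qfun r eps N)}"
  have Q_meas: "Qfun r eps N \<in> borel_measurable M"
    using Qfun_measurable[OF prob_space_imp_sigma_finite[OF N_prob] r_meas eps_meas] .
  then have q_meas: "q \<in> borel_measurable M" and A_sets: "A \<in> sets M"
    unfolding q_def A_def by measurable
  have q_nonneg: "0 \<le> q x" and q_le: "q x \<le> c" if "x \<in> space M" for x
    using Q_le that Qstar_fin by (auto simp: q_def c_def intro: enn2real_mono)
  have q_eq: "q x = c" if "x \<in> A" for x
    using that by (simp add: A_def q_def c_def)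
  have c_pos: "0 < c"
    using Qstar_pos Qstar_fin by (simp add: c_def enn2real_positive_iff)
  have p0_total: "(\<integral>x. p0 x \<partial>M) = 1"
    using p0_dens by (rule dens_set_integral_eq_1)
  have A_mass: "0 < (\<integral>x. p0 x * indicator A x \<partial>M)"
    using p0_dens A_sets A_pos unfolding A_def by (rule dens_set_integral_indicator_pos)
  note tilting = dens_set_integrable[OF p0_dens] dens_set_nonneg[OF p0_dens] q_meas q_nonneg q_le
  show ?thesis
    unfolding q_def[symmetric] c_def[symmetric]
    using Exp_dens_iter_dens_Suc[OF tilting p0_total moment_pos[OF tilting A_sets q_eq c_pos A_mass]]
      Exp_dens_iter_dens_tendsto[OF tilting p0_total A_sets q_eq c_pos A_mass]
    by simp
qed

end
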